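(* Consider the iterates of SAS-ADMM (so $L\succeq0$ and $(\tau,s)\in\Delta$) and let $k\ge1$. With $\tilde G_k$ as defined in the context, define $$\omega_0=\Big(2-\tau-s-\frac{(1-s)^2}{1+\tau}\Big)\beta,\qquad \omega_1=\frac{(1-s)^2}{1+\tau}\beta,\qquad \omega_2=\frac{1-\tau}{1+\tau}.$$ Then $\omega_0,\omega_1,\omega_2\ge0$ and $$\|w^k-\tilde w^k\|_{\tilde G_k}^2\ge\|x^k-x^{k+1}\|_{\mathcal D_k}^2+\omega_0\|Ax^{k+1}+By^{k+1}-b\|^2+\omega_1\big(\|Ax^{k+1}+By^{k+1}-b\|^2-\|Ax^k+By^k-b\|^2\big)+\omega_2\big(\|y^k-y^{k+1}\|_L^2-\|y^{k-1}-y^k\|_L^2\big).$$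
   Context: Setting. $\mathcal X\subset\mathbb R^{n_1}$, $\mathcal Y\subset\mathbb R^{n_2}$ are nonempty closed convex sets; $A\in\mathbb R^{n\times n_1}$, $B\in\mathbb R^{n\times n_2}$, $b\in\mathbb R^n$; $g:\mathcal Y\to\mathbb R\cup\{+\infty\}$ is proper convex; $f=\frac1N\sum_{j=1}^N f_j$, each $f_j$ real-valued, convex and continuously differentiable on an open set containing $\mathcal X$. The problem is $\min\{f(x)+g(y): x\in\mathcal X,\ y\in\mathcal Y,\ Ax+By=b\}$. A fixed symmetric positive definite $H\in\mathbb R^{n_1\times n_1}$ and a constant $\nu>0$ satisfy $\|\nabla f_j(x_1)-\nabla f_j(x_2)\|_{H^{-1}}\le \nu\|x_1-x_2\|_H$ for all $x_1,x_2\in\mathcal X$ and all $j$. For a symmetric matrix $G$, $\|v\|_G^2:=v^\top G v$ (also when $G$ is indefinite); $G_1\succeq G_2$ means $G_1-G_2$ is positive semidefinite. $\mathcal L_\beta(x,y,\lambda)=f(x)+g(y)-\lambda^\top(Ax+By-b)+\frac\beta2\|Ax+By-b\|^2$. $\Delta:=\{(\tau,s)\in\mathbb R^2:\ \tau+s>0,\ \tau\le1,\ -\tau^2-s^2-\tau s+\tau+s+1\ge0\}$. Subroutine xsub. Inputs: $x^k\in\mathcal X$, $\breve x^k$, $h\in\mathbb R^{n_1}$, an integer $m_k\ge1$, $\eta_k>0$, a symmetric matrix $M_k$. Set $x_1=x^k$, $\breve x_1=\breve x^k$. For $t=1,\dots,m_k$: draw $\xi_t$ uniformly from $\{1,\dots,N\}$,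 independently of everything generated before; set $\beta_t=2/(t+1)$, $\gamma_t=2/(t\eta_k)$, $\hat x_t=\beta_t\breve x_t+(1-\beta_t)x_t$, $d_t=\nabla f_{\xi_t}(\hat x_t)+e_t$ where $e_t$ is a random vector whose conditional expectation given all previously generated random quantities and $\xi_t$ is $0$; $\breve x_{t+1}=\arg\min_{x\in\mathcal X}\{\langle d_t+h,x\rangle+\frac{\gamma_t}2\|x-\breve x_t\|_H^2+\frac12\|x-x^k\|_{M_k}^2\}$; $x_{t+1}=\beta_t\breve x_{t+1}+(1-\beta_t)x_t$. Output $x^{k+1}=x_{m_k+1}$, $\breve x^{k+1}=\breve x_{m_k+1}$. Algorithm SAS-ADMM. Parameters: $\beta>0$, the matrix $H$, a symmetric positive semidefinite $L\in\mathbb R^{n_2\times n_2}$, $(\tau,s)\in\Delta$. Start: $(x^0,y^0,\lambda^0)\in\mathcal X\times\mathcal Y\times\mathbb R^n$, $\breve x^0=x^0$. For $k=0,1,\dots$: choose an integer $m_k\ge1$, $\eta_k>0$, and a symmetric $M_k$ with $\mathcal D_k:=M_k-\beta A^\top A\succeq0$; set $h^k=-A^\top[\lambda^k-\beta(Ax^k+By^k-b)]$; compute $(x^{k+1},\breve x^{k+1})$ by xsub with inputs $x^k,\breve x^k,h^k,m_k,\eta_k,M_k$; $\lambda^{k+1/2}=\lambda^k-\tau\beta(Ax^{k+1}+By^k-b)$; $y^{k+1}\in\arg\min_{y\in\mathcal Y}\mathcal L_\beta(x^{k+1},y,\lambda^{k+1/2})+\frac12\|y-y^k\|_L^2$ (a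 minimizer is assumed to exist); $\lambda^{k+1}=\lambda^{k+1/2}-s\beta(Ax^{k+1}+By^{k+1}-b)$. Notation. $w^k=(x^k;y^k;\lambda^k)$; $\tilde\lambda^k=\lambda^k-\beta(Ax^{k+1}+By^k-b)$; $\tilde w^k=(x^{k+1};y^{k+1};\tilde\lambda^k)$; $$\tilde G_k=\begin{bmatrix}\mathcal D_k&0&0\\0&L+(1-s)\beta B^\top B&(s-1)B^\top\\0&(s-1)B&\frac{2-\tau-s}{\beta}I\end{bmatrix}.$$ *)

theory Defs
  imports "HOL-Analysis.Analysis"
begin

definition sqnormG :: "real^'n^'n \<Rightarrow> real^'n \<Rightarrow> real" where
  "sqnormG G v = v \<bullet> (G *v v)"

definition sym_mat :: "real^'n^'n \<Rightarrow> bool" where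
  "sym_mat G \<longleftrightarrow> transpose G = G"

text \<open>G1 \<succeq> G2 : G1 - G2 positive semidefinite.\<close>
definition psd :: "real^'n^'n \<Rightarrow> bool" where
  "psd G \<longleftrightarrow> (\<forall>v. 0 \<le> sqnormG G v)"

definition pd :: "real^'n^'n \<Rightarrow> bool" where
  "pd G \<longleftrightarrow> (\<forall>v. v \<noteq> 0 \<longrightarrow> 0 < sqnormG G v)"

definition Delta_set :: "(real \<times> real) set" where
  "Delta_set = {(\<tau>, s). \<tau> + s > 0 \<and> \<tau> \<le> 1 \<and> 0 \<le> - (\<tau>^2) - s^2 - \<tau> * s + \<tau> + s + 1}"

definition proper_convex_ext :: "('n::real_vector) set \<Rightarrow> ('n \<Rightarrow> ereal) \<Rightarrow> bool" where
  "proper_convex_ext Y g \<longleftrightarrow>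
     (\<forall>y\<in>Y. g y \<noteq> -\<infinity>) \<and> (\<exists>y\<in>Y. g y \<noteq> \<infinity>) \<and>
     (\<forall>x\<in>Y. \<forall>y\<in>Y. \<forall>u::real. 0 < u \<and> u < 1 \<longrightarrow>
        g (u *\<^sub>R x + (1 - u) *\<^sub>R y) \<le> ereal u * g x + ereal (1 - u) * g y)"

definition aug_lag ::
  "(real^'a \<Rightarrow> real) \<Rightarrow> (real^'b \<Rightarrow> ereal) \<Rightarrow> real^'a^'c \<Rightarrow> real^'b^'c \<Rightarrow> real^'c \<Rightarrow> real
    \<Rightarrow> real^'a \<Rightarrow> real^'b \<Rightarrow> real^'c \<Rightarrow> ereal" where
  "aug_lag f g A B b \<beta> x y lam =
     ereal (f x) + g y
     + ereal (- (lam \<bullet> (A *v x + B *v y - b)) + \<beta> / 2 * (norm (A *v x + B *v y - b))^2)"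

text \<open>One realisation of subroutine xsub: the sample indices xi t \<in> {1..N} and the
  noise vectors e t are arbitrary (pathwise statement).  xs, bxs are the inner
  sequences x_t and breve x_t, t = 1..m+1; the outputs are xs (m+1), bxs (m+1).\<close>
definition xsub_run ::
  "(real^'a) set \<Rightarrow> nat \<Rightarrow> real^'a^'a \<Rightarrow> (nat \<Rightarrow> real^'a \<Rightarrow> real^'a)
   \<Rightarrow> real^'a \<Rightarrow> real^'a \<Rightarrow> real^'a \<Rightarrow> nat \<Rightarrow> real \<Rightarrow> real^'a^'a
   \<Rightarrow> (nat \<Rightarrow> nat) \<Rightarrow> (nat \<Rightarrow> real^'a) \<Rightarrow> (nat \<Rightarrow> real^'a) \<Rightarrow> (nat \<Rightarrow> real^'a) \<Rightarrow> bool" where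
  "xsub_run X N H gradf xk bxk h m \<eta> M xi e xs bxs \<longleftrightarrow>
     xs 1 = xk \<and> bxs 1 = bxk \<and>
     (\<forall>t\<in>{1..m}.
        let \<beta>t = 2 / (real t + 1);
            \<gamma>t = 2 / (real t * \<eta>);
            hx = \<beta>t *\<^sub>R bxs t + (1 - \<beta>t) *\<^sub>R xs t;
            d = gradf (xi t) hx + e t;
            obj = (\<lambda>z. (d + h) \<bullet> z + \<gamma>t / 2 * sqnormG H (z - bxs t) + 1 / 2 * sqnormG M (z - xk))
        in xi t \<in> {1..N} \<and>
           bxs (t + 1) \<in> X \<and> (\<forall>z\<in>X. obj (bxs (t + 1)) \<le> obj z) \<and>
           xs (t + 1) = \<beta>t *\<^sub>R bxs (t + 1) + (1 - \<beta>t) *\<^sub>R xs t)"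

text \<open>\<parallel>w - w'\<parallel>^2 in the block matrix G~_k, written out blockwise, with
  dx = x-part, dy = y-part, dl = lambda-part of w - w'.\<close>
definition Gtilde_sq ::
  "real^'a^'a \<Rightarrow> real^'b^'b \<Rightarrow> real^'b^'c \<Rightarrow> real \<Rightarrow> real \<Rightarrow> real \<Rightarrow>
   real^'a \<Rightarrow> real^'b \<Rightarrow> real^'c \<Rightarrow> real" where
  "Gtilde_sq D L B \<beta> \<tau> s dx dy dl =
     sqnormG D dx
     + sqnormG (L + ((1 - s) * \<beta>) *\<^sub>R (transpose B ** B)) dy
     + 2 * (s - 1) * (dl \<bullet> (B *v dy))
     + (2 - \<tau> - s) / \<beta> * (dl \<bullet> dl)"

end

theory Submission
  imports Defs
begin

text \<open>The \<open>y\<close>-update minimizes the proper convex \<open>g\<close> plus a quadratic, so it satisfies a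
  first-order variational inequality (move towards another point of \<open>Y\<close> along a segment and let
  the step length tend to \<open>0\<close>). Adding these inequalities for two consecutive \<open>y\<close>-steps cancels \<open>g\<close>;
  inserting the two multiplier updates turns the sum into a monotonicity inequality relating
  \<open>B (y k - y (k+1))\<close>, the residuals \<open>r k\<close>, \<open>r (k+1)\<close> and the \<open>L\<close>-proximal terms. What remains is
  scalar: multiplied by \<open>1 + \<tau>\<close>, the gap between the two sides of the claimed bound is a nonnegative
  combination of this inequality and of the squares \<open>\<parallel>y (k-1) - 2 y k + y (k+1)\<parallel>\<^sub>L\<^sup>2\<close>,
  \<open>\<parallel>y k - y (k+1)\<parallel>\<^sub>L\<^sup>2\<close> and \<open>\<parallel>(1 - \<tau>) B (y k - y (k+1)) + (1 - s) r k\<parallel>\<^sup>2\<close>.\<close>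

lemma sym_mat_inner_commute:
  fixes L :: "real^'n^'n"
  assumes "sym_mat L"
  shows "u \<bullet> (L *v w) = w \<bullet> (L *v u)"
proof -
  have "u v* L = L *v u"
    using assms by (metis sym_mat_def transpose_matrix_vector)
  then show ?thesis
    by (metis dot_lmul_matrix inner_commute)
qed

lemma inner_transpose_mult_self:
  fixes B :: "real^'n^'m"
  shows "x \<bullet> ((transpose B ** B) *v x) = (B *v x) \<bullet> (B *v x)"
  by (simp add: matrix_vector_mul_assoc[symmetric] dot_lmul_matrix[symmetric] inner_commute)

lemma nonneg_if_nonneg_near_zero:
  fixes a c :: real
  assumes "\<And>t. 0 < t \<Longrightarrow> t < 1 \<Longrightarrow> 0 \<le> t * a + t\<^sup>2 * c"
  shows "0 \<le> a"
proof -
  have "((\<lambda>t. a + t * c) \<longlongrightarrow> a) (at_right 0)"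
    by (auto intro!: tendsto_eq_intros)
  moreover have "\<forall>\<^sub>F t in at_right 0. 0 \<le> a + t * c"
  proof (rule eventually_at_rightI[of 0 1])
    fix t :: real
    assume "t \<in> {0<..<1}"
    then have "0 < t" "0 \<le> t * (a + t * c)"
      using assms[of t] by (auto simp: power2_eq_square algebra_simps)
    then show "0 \<le> a + t * c"
      by (simp add: zero_le_mult_iff)
  qed simp
  ultimately show ?thesis
    by (rule tendsto_lowerbound) simp
qed

lemma sqnormG_add:
  fixes L :: "real^'n^'n"
  assumes "sym_mat L"
  shows "sqnormG L (u + w) = sqnormG L u + 2 * (u \<bullet> (L *v w)) + sqnormG L w"
  using sym_mat_inner_commute[OF assms, of w u]
  by (simp add: sqnormG_def matrix_vector_right_distrib inner_add_left inner_add_right)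

lemma sqnormG_scaleR: "sqnormG L (c *\<^sub>R u) = c\<^sup>2 * sqnormG L u"
  by (simp add: sqnormG_def matrix_vector_mult_scaleR power2_eq_square)

lemma proper_convex_ext_minimizer_finite:
  fixes g :: "'a::real_vector \<Rightarrow> ereal" and F :: "'a \<Rightarrow> real"
  assumes g: "proper_convex_ext Y g" and p: "p \<in> Y"
    and min: "\<And>w. w \<in> Y \<Longrightarrow> g p + ereal (F p) \<le> g w + ereal (F w)"
  shows "g p \<noteq> \<infinity>"
proof
  assume "g p = \<infinity>"
  obtain w where w: "w \<in> Y" "g w \<noteq> \<infinity>" "g w \<noteq> -\<infinity>"
    using g unfolding proper_convex_ext_def by blast
  have "\<infinity> \<le> g w + ereal (F w)"
    using min[OF w(1)] \<open>g p = \<infinity>\<close> by simp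
  with w(2,3) show False
    by (cases "g w") auto
qed

lemma proper_convex_ext_minimizer_first_order:
  fixes g :: "'a::real_vector \<Rightarrow> ereal" and F :: "'a \<Rightarrow> real"
  assumes Y: "convex Y" and g: "proper_convex_ext Y g" and p: "p \<in> Y" and z: "z \<in> Y"
    and min: "\<And>w. w \<in> Y \<Longrightarrow> g p + ereal (F p) \<le> g w + ereal (F w)"
    and F_line: "\<And>t. F (p + t *\<^sub>R (z - p)) = F p + t * G + t\<^sup>2 * C"
    and gz: "g z \<noteq> \<infinity>"
  shows "real_of_ereal (g p) \<le> real_of_ereal (g z) + G"
proof -
  obtain gp gz where gp: "g p = ereal gp" and gz: "g z = ereal gz"
    using proper_convex_ext_minimizer_finite[OF g p min] gz g p z
    unfolding proper_convex_ext_def by (cases "g p"; cases "g z") auto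
  have "0 \<le> gz - gp + G"
  proof (rule nonneg_if_nonneg_near_zero[where c = C])
    fix t :: real
    assume t: "0 < t" "t < 1"
    define w where "w = t *\<^sub>R z + (1 - t) *\<^sub>R p"
    have "w \<in> Y"
      unfolding w_def using Y z p t by (intro convexD) auto
    have gw: "g w \<le> ereal (t * gz + (1 - t) * gp)"
      using g z p t gz gp unfolding proper_convex_ext_def w_def by fastforce
    have "ereal (gp + F p) = g p + ereal (F p)"
      using gp by simp
    also have "\<dots> \<le> g w + ereal (F w)"
      using min[OF \<open>w \<in> Y\<close>] .
    also have "\<dots> \<le> ereal (t * gz + (1 - t) * gp) + ereal (F w)"
      using gw by (rule add_right_mono)
    finally have "gp + F p \<le> t * gz + (1 - t) * gp + F w"
      by simp
    moreover have "w = p + t *\<^sub>R (z - p)"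
      unfolding w_def by (simp add: algebra_simps)
    ultimately show "0 \<le> t * (gz - gp + G) + t\<^sup>2 * C"
      using F_line[of t] by (simp add: algebra_simps)
  qed
  then show ?thesis
    using gp gz by simp
qed

lemma aug_lag_add_ereal:
  "aug_lag f g A B b \<beta> x z lam + ereal c =
     g z + ereal (f x - lam \<bullet> (A *v x + B *v z - b) + \<beta> / 2 * (norm (A *v x + B *v z - b))\<^sup>2 + c)"
  by (cases "g z") (simp_all add: aug_lag_def algebra_simps)

lemma aug_lag_prox_minimizer_finite:
  assumes g: "proper_convex_ext Y g" and p: "p \<in> Y"
    and min: "\<And>z. z \<in> Y \<Longrightarrow>
      aug_lag f g A B b \<beta> x p lam + ereal (1/2 * sqnormG L (p - y0))
      \<le> aug_lag f g A B b \<beta> x z lam + ereal (1/2 * sqnormG L (z - y0))"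
  shows "g p \<noteq> \<infinity>"
  using min unfolding aug_lag_add_ereal by (rule proper_convex_ext_minimizer_finite[OF g p])

lemma aug_lag_prox_first_order:
  assumes Y: "convex Y" and g: "proper_convex_ext Y g" and L: "sym_mat L"
    and p: "p \<in> Y" and z: "z \<in> Y" and gz: "g z \<noteq> \<infinity>"
    and min: "\<And>z. z \<in> Y \<Longrightarrow>
      aug_lag f g A B b \<beta> x p lam + ereal (1/2 * sqnormG L (p - y0))
      \<le> aug_lag f g A B b \<beta> x z lam + ereal (1/2 * sqnormG L (z - y0))"
  shows "real_of_ereal (g p) \<le> real_of_ereal (g z)
           + (\<beta> *\<^sub>R (A *v x + B *v p - b) - lam) \<bullet> (B *v (z - p)) + (p - y0) \<bullet> (L *v (z - p))"
proof -
  define F where "F w = f x - lam \<bullet> (A *v x + B *v w - b) + \<beta> / 2 * (norm (A *v x + B *v w - b))\<^sup>2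
                        + 1/2 * sqnormG L (w - y0)" for w
  define r where "r = A *v x + B *v p - b"
  define v where "v = B *v (z - p)"
  have F_line: "F (p + t *\<^sub>R (z - p)) = F p + t * ((\<beta> *\<^sub>R r - lam) \<bullet> v + (p - y0) \<bullet> (L *v (z - p)))
          + t\<^sup>2 * (\<beta> / 2 * (v \<bullet> v) + 1/2 * sqnormG L (z - p))" for t
  proof -
    have res: "A *v x + B *v (p + t *\<^sub>R (z - p)) - b = r + t *\<^sub>R v"
      by (simp add: r_def v_def matrix_vector_right_distrib matrix_vector_mult_scaleR)
    have shift: "p + t *\<^sub>R (z - p) - y0 = (p - y0) + t *\<^sub>R (z - p)"
      by (simp add: algebra_simps)
    have norm_res: "(norm (r + t *\<^sub>R v))\<^sup>2 = (norm r)\<^sup>2 + 2 * t * (r \<bullet> v) + t\<^sup>2 * (v \<bullet> v)"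
      unfolding power2_norm_eq_inner
      by (simp add: inner_add_left inner_add_right inner_commute power2_eq_square algebra_simps)
    show ?thesis
      unfolding F_def res shift norm_res r_def[symmetric] sqnormG_add[OF L] sqnormG_scaleR
      by (simp add: matrix_vector_mult_scaleR inner_diff_left algebra_simps)
  qed
  have "g p + ereal (F p) \<le> g w + ereal (F w)" if "w \<in> Y" for w
    using min[OF that] unfolding aug_lag_add_ereal F_def .
  from proper_convex_ext_minimizer_first_order[OF Y g p z this F_line gz]
  show ?thesis
    by (simp add: r_def v_def)
qed

lemma aug_lag_prox_consecutive_monotone:
  assumes Y: "convex Y" and g: "proper_convex_ext Y g" and L: "sym_mat L"
    and p: "p \<in> Y" and q: "q \<in> Y"
    and min_p: "\<And>z. z \<in> Y \<Longrightarrow>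
      aug_lag f g A B b \<beta> x1 p lam1 + ereal (1/2 * sqnormG L (p - y0))
      \<le> aug_lag f g A B b \<beta> x1 z lam1 + ereal (1/2 * sqnormG L (z - y0))"
    and min_q: "\<And>z. z \<in> Y \<Longrightarrow>
      aug_lag f g A B b \<beta> x2 q lam2 + ereal (1/2 * sqnormG L (q - p))
      \<le> aug_lag f g A B b \<beta> x2 z lam2 + ereal (1/2 * sqnormG L (z - p))"
  shows "0 \<le> (\<beta> *\<^sub>R ((A *v x2 + B *v q - b) - (A *v x1 + B *v p - b)) + (lam1 - lam2)) \<bullet> (B *v (p - q))
             - sqnormG L (p - q) + (y0 - p) \<bullet> (L *v (p - q))"
proof -
  have "real_of_ereal (g p) \<le> real_of_ereal (g q)
          + (\<beta> *\<^sub>R (A *v x1 + B *v p - b) - lam1) \<bullet> (B *v (q - p)) + (p - y0) \<bullet> (L *v (q - p))"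
    using aug_lag_prox_first_order[OF Y g L p q aug_lag_prox_minimizer_finite[OF g q min_q] min_p] .
  moreover have "real_of_ereal (g q) \<le> real_of_ereal (g p)
          + (\<beta> *\<^sub>R (A *v x2 + B *v q - b) - lam2) \<bullet> (B *v (p - q)) + (q - p) \<bullet> (L *v (p - q))"
    using aug_lag_prox_first_order[OF Y g L q p aug_lag_prox_minimizer_finite[OF g p min_p] min_q] .
  moreover have "B *v (q - p) = - (B *v (p - q))" "L *v (q - p) = - (L *v (p - q))"
    by (simp_all add: matrix_vector_mult_diff_distrib)
  ultimately show ?thesis
    by (simp add: sqnormG_def inner_diff_left inner_add_left algebra_simps)
qed

lemma Delta_set_tau_gt:
  assumes "(\<tau>, s) \<in> Delta_set"
  shows "-1 < \<tau>"
proof (rule ccontr)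
  assume "\<not> -1 < \<tau>"
  with assms have "0 \<le> (5 - 3 * \<tau>) * (-1 - \<tau>)" "0 < (2 * s - 1 + \<tau>)\<^sup>2"
    by (auto simp: Delta_set_def)
  moreover have "4 * (- \<tau>\<^sup>2 - s\<^sup>2 - \<tau> * s + \<tau> + s + 1) = - ((2 * s - 1 + \<tau>)\<^sup>2 + (5 - 3 * \<tau>) * (-1 - \<tau>))"
    by (simp add: power2_eq_square algebra_simps)
  moreover have "0 \<le> - \<tau>\<^sup>2 - s\<^sup>2 - \<tau> * s + \<tau> + s + 1"
    using assms by (simp add: Delta_set_def)
  ultimately show False
    by (smt (verit))
qed

lemma Delta_set_weights_nonneg:
  assumes \<tau>s: "(\<tau>, s) \<in> Delta_set" and \<beta>: "0 < \<beta>"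
  shows "0 \<le> (2 - \<tau> - s - (1 - s)\<^sup>2 / (1 + \<tau>)) * \<beta>"
    and "0 \<le> (1 - s)\<^sup>2 / (1 + \<tau>) * \<beta>"
    and "0 \<le> (1 - \<tau>) / (1 + \<tau>)"
proof -
  have \<tau>: "0 < 1 + \<tau>" "\<tau> \<le> 1"
    using Delta_set_tau_gt[OF \<tau>s] \<tau>s by (auto simp: Delta_set_def)
  have "(2 - \<tau> - s) * (1 + \<tau>) - (1 - s)\<^sup>2 = - \<tau>\<^sup>2 - s\<^sup>2 - \<tau> * s + \<tau> + s + 1"
    by (simp add: power2_eq_square algebra_simps)
  with \<tau>s have "(1 - s)\<^sup>2 / (1 + \<tau>) \<le> 2 - \<tau> - s"
    using \<tau> by (simp add: Delta_set_def divide_le_eq)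
  with \<beta> \<tau> show "0 \<le> (2 - \<tau> - s - (1 - s)\<^sup>2 / (1 + \<tau>)) * \<beta>"
    "0 \<le> (1 - s)\<^sup>2 / (1 + \<tau>) * \<beta>" "0 \<le> (1 - \<tau>) / (1 + \<tau>)"
    by simp_all
qed

lemma sas_admm_scalar_bound:
  fixes \<beta> \<tau> s uu uv vv vr rr Ly Lp Lc :: real
  assumes \<beta>: "0 < \<beta>" and \<tau>: "-1 < \<tau>" "\<tau> \<le> 1"
    and mono: "0 \<le> \<beta> * uv + s * \<beta> * vr + \<tau> * \<beta> * (uv + vv) - \<beta> * vr - Ly + Lc"
    and L_diff: "0 \<le> Ly - 2 * Lc + Lp" and L: "0 \<le> Ly"
    and sq: "0 \<le> (1 - \<tau>)\<^sup>2 * vv + 2 * (1 - \<tau>) * (1 - s) * vr + (1 - s)\<^sup>2 * rr"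
  shows "(2 - \<tau> - s - (1 - s)\<^sup>2 / (1 + \<tau>)) * \<beta> * uu + (1 - s)\<^sup>2 / (1 + \<tau>) * \<beta> * (uu - rr)
           + (1 - \<tau>) / (1 + \<tau>) * (Ly - Lp)
         \<le> Ly + (1 - s) * \<beta> * vv + 2 * (s - 1) * \<beta> * (uv + vv) + (2 - \<tau> - s) * \<beta> * (uu + 2 * uv + vv)"
    (is "?lhs \<le> ?rhs")
proof -
  have "0 < 1 + \<tau>"
    using \<tau> by simp
  define a where "a = (1 - s)\<^sup>2 / (1 + \<tau>)"
  define c where "c = (1 - \<tau>) / (1 + \<tau>)"
  have "a * (1 + \<tau>) = (1 - s)\<^sup>2" "c * (1 + \<tau>) = 1 - \<tau>"
    using \<open>0 < 1 + \<tau>\<close> by (simp_all add: a_def c_def)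
  then have "(1 + \<tau>) * (?rhs - ?lhs)
      = (1 + \<tau>) * Ly + \<beta> * ((1 - \<tau>)\<^sup>2 * vv + 2 * (1 - \<tau>) * (1 - s) * vr + (1 - s)\<^sup>2 * rr)
        + (1 - \<tau>) * (Ly - 2 * Lc + Lp)
        + 2 * (1 - \<tau>) * (\<beta> * uv + s * \<beta> * vr + \<tau> * \<beta> * (uv + vv) - \<beta> * vr - Ly + Lc)"
    unfolding a_def[symmetric] c_def[symmetric] by algebra
  also have "0 \<le> \<dots>"
    using \<beta> \<tau> mono L_diff L sq by simp
  finally show ?thesis
    using \<open>0 < 1 + \<tau>\<close> by (simp add: zero_le_mult_iff)
qed

lemma Gtilde_sq_lower_bound:
  fixes D :: "real^'a^'a" and L :: "real^'b^'b" and B :: "real^'b^'c" and u r :: "real^'c"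
  assumes \<beta>: "0 < \<beta>" and \<tau>: "-1 < \<tau>" "\<tau> \<le> 1" and L: "sym_mat L" "psd L"
    and mono: "0 \<le> (\<beta> *\<^sub>R (u - r) + ((s * \<beta>) *\<^sub>R r + (\<tau> * \<beta>) *\<^sub>R (u + B *v dy))) \<bullet> (B *v dy)
                   - sqnormG L dy + dy' \<bullet> (L *v dy)"
  shows "sqnormG D dx + (2 - \<tau> - s - (1 - s)\<^sup>2 / (1 + \<tau>)) * \<beta> * (norm u)\<^sup>2
           + (1 - s)\<^sup>2 / (1 + \<tau>) * \<beta> * ((norm u)\<^sup>2 - (norm r)\<^sup>2)
           + (1 - \<tau>) / (1 + \<tau>) * (sqnormG L dy - sqnormG L dy')
         \<le> Gtilde_sq D L B \<beta> \<tau> s dx dy (\<beta> *\<^sub>R (u + B *v dy))"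
proof -
  define v where "v = B *v dy"
  have "0 \<le> sqnormG L (dy - dy')"
    using L(2) by (simp add: psd_def)
  then have L_diff: "0 \<le> sqnormG L dy - 2 * (dy' \<bullet> (L *v dy)) + sqnormG L dy'"
    using sym_mat_inner_commute[OF L(1), of dy dy']
    by (simp add: sqnormG_def matrix_vector_mult_diff_distrib inner_diff_left inner_diff_right)
  have "0 \<le> ((1 - \<tau>) *\<^sub>R v + (1 - s) *\<^sub>R r) \<bullet> ((1 - \<tau>) *\<^sub>R v + (1 - s) *\<^sub>R r)"
    by simp
  then have sq: "0 \<le> (1 - \<tau>)\<^sup>2 * (v \<bullet> v) + 2 * (1 - \<tau>) * (1 - s) * (v \<bullet> r) + (1 - s)\<^sup>2 * (r \<bullet> r)"
    by (simp add: inner_add_left inner_add_right inner_commute power2_eq_square algebra_simps)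
  have "(2 - \<tau> - s) / \<beta> * ((\<beta> *\<^sub>R (u + v)) \<bullet> (\<beta> *\<^sub>R (u + v)))
      = (2 - \<tau> - s) * \<beta> * (u \<bullet> u + 2 * (u \<bullet> v) + v \<bullet> v)"
    using \<beta> by (simp add: inner_add_left inner_add_right inner_commute power2_eq_square)
  then have expand: "Gtilde_sq D L B \<beta> \<tau> s dx dy (\<beta> *\<^sub>R (u + v))
      = sqnormG D dx + (sqnormG L dy + (1 - s) * \<beta> * (v \<bullet> v) + 2 * (s - 1) * \<beta> * (u \<bullet> v + v \<bullet> v)
          + (2 - \<tau> - s) * \<beta> * (u \<bullet> u + 2 * (u \<bullet> v) + v \<bullet> v))"
    unfolding Gtilde_sq_def sqnormG_def v_def
    by (simp add: matrix_vector_mult_add_rdistrib scaleR_matrix_vector_assoc[symmetric]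
        inner_transpose_mult_self inner_add_left inner_commute algebra_simps)
  have mono': "0 \<le> \<beta> * (u \<bullet> v) + s * \<beta> * (v \<bullet> r) + \<tau> * \<beta> * (u \<bullet> v + v \<bullet> v) - \<beta> * (v \<bullet> r)
                      - sqnormG L dy + dy' \<bullet> (L *v dy)"
    using mono unfolding v_def[symmetric]
    by (simp add: inner_add_left inner_diff_left inner_commute algebra_simps)
  have "0 \<le> sqnormG L dy"
    using L(2) by (simp add: psd_def)
  from sas_admm_scalar_bound[where uu = "u \<bullet> u", OF \<beta> \<tau> mono' L_diff this sq]
  show ?thesis
    unfolding v_def[symmetric] expand power2_norm_eq_inner by simp
qed

theorem theorem3p3:
  fixes X :: "(real^'a) set" and Y :: "(real^'b) set"
    and A :: "real^'a^'c" and B :: "real^'b^'c" and b :: "real^'c"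
    and g :: "real^'b \<Rightarrow> ereal"
    and N :: nat and fs :: "nat \<Rightarrow> real^'a \<Rightarrow> real" and gradf :: "nat \<Rightarrow> real^'a \<Rightarrow> real^'a"
    and U :: "(real^'a) set"
    and H :: "real^'a^'a" and \<nu> :: real
    and \<beta> :: real and L :: "real^'b^'b" and \<tau> s :: real
    and x bx :: "nat \<Rightarrow> real^'a" and y :: "nat \<Rightarrow> real^'b" and lam lamh :: "nat \<Rightarrow> real^'c"
    and m :: "nat \<Rightarrow> nat" and \<eta> :: "nat \<Rightarrow> real" and M :: "nat \<Rightarrow> real^'a^'a"
    and xi :: "nat \<Rightarrow> nat \<Rightarrow> nat" and e :: "nat \<Rightarrow> nat \<Rightarrow> real^'a"
    and xin bxin :: "nat \<Rightarrow> nat \<Rightarrow> real^'a"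
    and k :: nat
  defines "f \<equiv> (\<lambda>z. (\<Sum>j=1..N. fs j z) / real N)"
  assumes X: "X \<noteq> {}" "closed X" "convex X"
    and Y: "Y \<noteq> {}" "closed Y" "convex Y"
    and g: "proper_convex_ext Y g"
    and N: "N \<ge> 1"
    and U: "open U" "X \<subseteq> U"
    and fs_diff: "\<And>j z. j \<in> {1..N} \<Longrightarrow> z \<in> U \<Longrightarrow>
                    (fs j has_derivative (\<lambda>v. gradf j z \<bullet> v)) (at z)"
    and fs_C1: "\<And>j. j \<in> {1..N} \<Longrightarrow> continuous_on U (gradf j)"
    and H: "sym_mat H" "pd H"
    and \<nu>: "\<nu> > 0"
    and lip: "\<And>j x1 x2. j \<in> {1..N} \<Longrightarrow> x1 \<in> X \<Longrightarrow> x2 \<in> X \<Longrightarrow>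
               sqrt (sqnormG (matrix_inv H) (gradf j x1 - gradf j x2)) \<le> \<nu> * sqrt (sqnormG H (x1 - x2))"
    and \<beta>: "\<beta> > 0"
    and L: "sym_mat L" "psd L"
    and \<tau>s: "(\<tau>, s) \<in> Delta_set"
    and init: "x 0 \<in> X" "y 0 \<in> Y" "bx 0 = x 0"
    and m: "\<And>j. m j \<ge> 1"
    and \<eta>: "\<And>j. \<eta> j > 0"
    and M: "\<And>j. sym_mat (M j)" "\<And>j. psd (M j - \<beta> *\<^sub>R (transpose A ** A))"
    and xsub: "\<And>j. xsub_run X N H gradf (x j) (bx j)
                 (- (transpose A *v (lam j - \<beta> *\<^sub>R (A *v x j + B *v y j - b))))
                 (m j) (\<eta> j) (M j) (xi j) (e j) (xin j) (bxin j)"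
    and xupd: "\<And>j. x (Suc j) = xin j (m j + 1)" "\<And>j. bx (Suc j) = bxin j (m j + 1)"
    and lamh: "\<And>j. lamh j = lam j - (\<tau> * \<beta>) *\<^sub>R (A *v x (Suc j) + B *v y j - b)"
    and yupd: "\<And>j. y (Suc j) \<in> Y"
              "\<And>j z. z \<in> Y \<Longrightarrow>
                 aug_lag f g A B b \<beta> (x (Suc j)) (y (Suc j)) (lamh j) + ereal (1/2 * sqnormG L (y (Suc j) - y j))
                 \<le> aug_lag f g A B b \<beta> (x (Suc j)) z (lamh j) + ereal (1/2 * sqnormG L (z - y j))"
    and lamupd: "\<And>j. lam (Suc j) = lamh j - (s * \<beta>) *\<^sub>R (A *v x (Suc j) + B *v y (Suc j) - b)"
    and k: "k \<ge> 1"
  shows "(let \<omega>0 = (2 - \<tau> - s - (1 - s)^2 / (1 + \<tau>)) * \<beta>;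
              \<omega>1 = (1 - s)^2 / (1 + \<tau>) * \<beta>;
              \<omega>2 = (1 - \<tau>) / (1 + \<tau>);
              D = M k - \<beta> *\<^sub>R (transpose A ** A);
              r = (\<lambda>j. A *v x j + B *v y j - b);
              lamt = lam k - \<beta> *\<^sub>R (A *v x (Suc k) + B *v y k - b)
          in \<omega>0 \<ge> 0 \<and> \<omega>1 \<ge> 0 \<and> \<omega>2 \<ge> 0 \<and>
             Gtilde_sq D L B \<beta> \<tau> s (x k - x (Suc k)) (y k - y (Suc k)) (lam k - lamt)
             \<ge> sqnormG D (x k - x (Suc k))
               + \<omega>0 * (norm (r (Suc k)))^2
               + \<omega>1 * ((norm (r (Suc k)))^2 - (norm (r k))^2)
               + \<omega>2 * (sqnormG L (y k - y (Suc k)) - sqnormG L (y (k - 1) - y k)))"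
proof -
  \<comment> \<open>Only the \<open>y\<close>- and multiplier updates enter; the \<open>x\<close>-block of \<open>Gtilde_sq\<close> appears on both sides.\<close>
  obtain j where k_eq: "k = Suc j"
    using k by (cases k) auto
  define u where "u = A *v x (Suc k) + B *v y (Suc k) - b"
  define r where "r = A *v x k + B *v y k - b"
  define dy where "dy = y k - y (Suc k)"
  have res: "A *v x (Suc k) + B *v y k - b = u + B *v dy"
    by (simp add: u_def dy_def matrix_vector_mult_diff_distrib)
  have "lamh j - lamh k = (s * \<beta>) *\<^sub>R r + (\<tau> * \<beta>) *\<^sub>R (u + B *v dy)"
    using lamupd[of j] lamh[of k] res by (simp add: k_eq r_def)
  moreover have "0 \<le> (\<beta> *\<^sub>R (u - r) + (lamh j - lamh k)) \<bullet> (B *v dy) - sqnormG L dy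
                      + (y (k - 1) - y k) \<bullet> (L *v dy)"
    using aug_lag_prox_consecutive_monotone[OF Y(3) g L(1) yupd(1)[of j] yupd(1)[of "Suc j"]
        yupd(2)[of _ j] yupd(2)[of _ "Suc j"]]
    unfolding k_eq u_def r_def dy_def by simp
  ultimately have "0 \<le> (\<beta> *\<^sub>R (u - r) + ((s * \<beta>) *\<^sub>R r + (\<tau> * \<beta>) *\<^sub>R (u + B *v dy))) \<bullet> (B *v dy)
                      - sqnormG L dy + (y (k - 1) - y k) \<bullet> (L *v dy)"
    by simp
  from Gtilde_sq_lower_bound[OF \<beta> Delta_set_tau_gt[OF \<tau>s] _ L this] \<tau>s
    Delta_set_weights_nonneg[OF \<tau>s \<beta>] res
  show ?thesis
    unfolding Let_def u_def[symmetric] r_def[symmetric] dy_def[symmetric]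
    by (simp add: Delta_set_def)
qed

end
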